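(* Drop the abundance condition and assume instead only $\mu\ge1/n(\boldsymbol h)$. Then for every $\boldsymbol m\in[0,1]^2$ there is an equilibrium, and every equilibrium maximizes total output over feasible allocations. Moreover: (a) If $\boldsymbol m\in R_s\cup R_t$ or $\boldsymbol m\in R_b\cap K$, then the following is an equilibrium: $r^*=F(\boldsymbol m)$, $w^*=\max\{\bar w_s,\bar w_b,\bar w_t\}$, and the allocation is $\alpha_s^*=1,\mu_s^*=\mu$ if $\boldsymbol m\in R_s$; $\alpha_b^*=1,\mu_b^*=n(\boldsymbol m),\mu_s^*=\mu-n(\boldsymbol m)$ if $\boldsymbol m\in R_b\cap K$; $\alpha_t^*=1,\mu_t^*=1/n(\boldsymbol h),\mu_s^*=\mu-1/n(\boldsymbol h)$ if $\boldsymbol m\in R_t$. (b) If $\boldsymbol m\in R_b\cap K^c\cap R_m$, then only $b$ and $t$ firms form: $\alpha_b^*+\alpha_t^*=1$, $\mu_b^*+\mu_t^*=\mu$ with $\mu_b^*=\alpha_b^*n(\boldsymbol m)$, $\mu_t^*=\alpha_t^*/n(\boldsymbol h)$, and the prices are $r^*=F(\boldsymbol m)+\frac{n(\boldsymbol h)(\bar w_b-\bar w_t)}{n(\boldsymbol m)n(\boldsymbol h)-1}$, $w^*=\bar w_b-\frac{n(\boldsymbol m)n(\boldsymbol h)(\bar w_b-\bar w_t)}{n(\boldsymbol m)n(\boldsymbol h)-1}$. (c) If $\boldsymbol m\in R_b\cap K^c\cap R_m^c$, then only $b$ and single-layer non-automated firms form: $\alpha_b^*=\mu/n(\boldsymbol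 m)$, $\alpha_s^*=1-\alpha_b^*$, $\mu_b^*=\mu$, with prices $r^*=F(\boldsymbol m\vee\boldsymbol h)-F(\boldsymbol h)/n(\boldsymbol m)$ and $w^*=F(\boldsymbol h)$.
   Context: Fix a cumulative distribution function $F$ on $[0,1]^2$ with a density $f$ that has full support on $[0,1]^2$; a problem $\boldsymbol x$ is drawn from $F$. Fix $c\in(0,1)$, human knowledge $\boldsymbol h\in(0,1)^2$ (unit mass of humans, one unit of time each), and a mass $\mu>0$ of machines with common knowledge $\boldsymbol m\in[0,1]^2$ (one unit of time each). Write $\boldsymbol x\vee\boldsymbol y$ for the componentwise maximum and, for $F(\boldsymbol x)<1$, $n(\boldsymbol x)=\frac{1}{c(1-F(\boldsymbol x))}$. Given wage $w\ge0$ and rental rate $r\ge0$, firm types and profits: single-layer non-automated $F(\boldsymbol h)-w$; single-layer automated $F(\boldsymbol m)-r$; bottom-automated $b$ (one human solver, $n(\boldsymbol m)$ machine workers; available only when $F(\boldsymbol m)<1$) $\Pi_b=n(\boldsymbol m)[F(\boldsymbol m\vee\boldsymbol h)-r]-w$; top-automated $t$ (one machine solver, $n(\boldsymbol h)$ human workers) $\Pi_t=n(\boldsymbol h)[F(\boldsymbol m\vee\boldsymbol h)-w]-r$. A feasible allocation is $(\alpha_s,\alpha_b,\alpha_t,\mu_s,\mu_b,\mu_t)\ge0$ with $\mu_b=\alpha_bn(\boldsymbol m)$, $\mu_t=\alpha_t/n(\boldsymbol h)$, $\alpha_s+\alpha_b+\alpha_t=1$, $\mu_s+\mu_b+\mu_t=\mu$;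 total output $Y=\alpha_bn(\boldsymbol m)F(\boldsymbol m\vee\boldsymbol h)+\alpha_tF(\boldsymbol m\vee\boldsymbol h)+\alpha_sF(\boldsymbol h)+\mu_sF(\boldsymbol m)$. An equilibrium is a feasible allocation and prices $(w,r)\ge0$ such that all firm types have nonpositive profit and types used with positive mass earn zero profit. Define $\bar w_s=F(\boldsymbol h)$, $\bar w_b=n(\boldsymbol m)(F(\boldsymbol m\vee\boldsymbol h)-F(\boldsymbol m))$ (with $\bar w_b:=0$ if $F(\boldsymbol m)=1$), $\bar w_t=F(\boldsymbol m\vee\boldsymbol h)-F(\boldsymbol m)/n(\boldsymbol h)$; $R_s=\{\boldsymbol m:\bar w_s\ge\max\{\bar w_b,\bar w_t\}\}$, $R_b=\{\boldsymbol m:\bar w_b>\max\{\bar w_s,\bar w_t\}\}$, $R_t=[0,1]^2\setminus(R_s\cup R_b)$; $K=\{\boldsymbol m\in[0,1]^2:F(\boldsymbol m)<1,\ \mu\ge n(\boldsymbol m)\}$; $R_m=\{\boldsymbol m\in[0,1]^2:\bar w_b-\bar w_s\le n(\boldsymbol m)n(\boldsymbol h)(\bar w_t-\bar w_s)\}$. Complements are taken in $[0,1]^2$. *)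

theory Defs
  imports "HOL-Analysis.Analysis"
begin

definition unitsq :: "(real \<times> real) set" where
  "unitsq = {0..1} \<times> {0..1}"

definition vmax :: "real \<times> real \<Rightarrow> real \<times> real \<Rightarrow> real \<times> real" where
  "vmax x y = (max (fst x) (fst y), max (snd x) (snd y))"

text \<open>n(x) = 1 / (c (1 - F x)), used only when F x < 1.\<close>
definition nn :: "real \<Rightarrow> (real \<times> real \<Rightarrow> real) \<Rightarrow> real \<times> real \<Rightarrow> real" where
  "nn c F x = 1 / (c * (1 - F x))"

record alloc =
  a_s :: real
  a_b :: real
  a_t :: real
  m_s :: real
  m_b :: real
  m_t :: real

definition prof_s :: "(real \<times> real \<Rightarrow> real) \<Rightarrow> real \<times> real \<Rightarrow> real \<Rightarrow> real" where
  "prof_s F h w = F h - w"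

definition prof_a :: "(real \<times> real \<Rightarrow> real) \<Rightarrow> real \<times> real \<Rightarrow> real \<Rightarrow> real" where
  "prof_a F m r = F m - r"

definition prof_b :: "real \<Rightarrow> (real \<times> real \<Rightarrow> real) \<Rightarrow> real \<times> real \<Rightarrow> real \<times> real \<Rightarrow> real \<Rightarrow> real \<Rightarrow> real" where
  "prof_b c F h m w r = nn c F m * (F (vmax m h) - r) - w"

definition prof_t :: "real \<Rightarrow> (real \<times> real \<Rightarrow> real) \<Rightarrow> real \<times> real \<Rightarrow> real \<times> real \<Rightarrow> real \<Rightarrow> real \<Rightarrow> real" where
  "prof_t c F h m w r = nn c F h * (F (vmax m h) - w) - r"

text \<open>Feasible allocations. The bottom-automated type is only available when F m < 1,
  so it cannot be used (alpha_b = 0) when F m = 1.\<close>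
definition feasible :: "real \<Rightarrow> (real \<times> real \<Rightarrow> real) \<Rightarrow> real \<times> real \<Rightarrow> real \<Rightarrow> real \<times> real \<Rightarrow> alloc \<Rightarrow> bool" where
  "feasible c F h \<mu> m A \<longleftrightarrow>
     a_s A \<ge> 0 \<and> a_b A \<ge> 0 \<and> a_t A \<ge> 0 \<and> m_s A \<ge> 0 \<and> m_b A \<ge> 0 \<and> m_t A \<ge> 0 \<and>
     (F m \<ge> 1 \<longrightarrow> a_b A = 0) \<and>
     m_b A = a_b A * nn c F m \<and> m_t A = a_t A / nn c F h \<and>
     a_s A + a_b A + a_t A = 1 \<and> m_s A + m_b A + m_t A = \<mu>"

definition total_output :: "real \<Rightarrow> (real \<times> real \<Rightarrow> real) \<Rightarrow> real \<times> real \<Rightarrow> real \<times> real \<Rightarrow> alloc \<Rightarrow> real" where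
  "total_output c F h m A =
     a_b A * nn c F m * F (vmax m h) + a_t A * F (vmax m h) + a_s A * F h + m_s A * F m"

definition equilibrium ::
  "real \<Rightarrow> (real \<times> real \<Rightarrow> real) \<Rightarrow> real \<times> real \<Rightarrow> real \<Rightarrow> real \<times> real \<Rightarrow> alloc \<Rightarrow> real \<Rightarrow> real \<Rightarrow> bool" where
  "equilibrium c F h \<mu> m A w r \<longleftrightarrow>
     feasible c F h \<mu> m A \<and> w \<ge> 0 \<and> r \<ge> 0 \<and>
     prof_s F h w \<le> 0 \<and> prof_a F m r \<le> 0 \<and>
     (F m < 1 \<longrightarrow> prof_b c F h m w r \<le> 0) \<and> prof_t c F h m w r \<le> 0 \<and>
     (a_s A > 0 \<longrightarrow> prof_s F h w = 0) \<and> (m_s A > 0 \<longrightarrow> prof_a F m r = 0) \<and>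
     (a_b A > 0 \<longrightarrow> prof_b c F h m w r = 0) \<and> (a_t A > 0 \<longrightarrow> prof_t c F h m w r = 0)"

definition wbar_s :: "(real \<times> real \<Rightarrow> real) \<Rightarrow> real \<times> real \<Rightarrow> real" where
  "wbar_s F h = F h"

definition wbar_b :: "real \<Rightarrow> (real \<times> real \<Rightarrow> real) \<Rightarrow> real \<times> real \<Rightarrow> real \<times> real \<Rightarrow> real" where
  "wbar_b c F h m = (if F m = 1 then 0 else nn c F m * (F (vmax m h) - F m))"

definition wbar_t :: "real \<Rightarrow> (real \<times> real \<Rightarrow> real) \<Rightarrow> real \<times> real \<Rightarrow> real \<times> real \<Rightarrow> real" where
  "wbar_t c F h m = F (vmax m h) - F m / nn c F h"

definition R_s :: "real \<Rightarrow> (real \<times> real \<Rightarrow> real) \<Rightarrow> real \<times> real \<Rightarrow> (real \<times> real) set" where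
  "R_s c F h = {m \<in> unitsq. wbar_s F h \<ge> max (wbar_b c F h m) (wbar_t c F h m)}"

definition R_b :: "real \<Rightarrow> (real \<times> real \<Rightarrow> real) \<Rightarrow> real \<times> real \<Rightarrow> (real \<times> real) set" where
  "R_b c F h = {m \<in> unitsq. wbar_b c F h m > max (wbar_s F h) (wbar_t c F h m)}"

definition R_t :: "real \<Rightarrow> (real \<times> real \<Rightarrow> real) \<Rightarrow> real \<times> real \<Rightarrow> (real \<times> real) set" where
  "R_t c F h = unitsq - (R_s c F h \<union> R_b c F h)"

definition K_set :: "real \<Rightarrow> (real \<times> real \<Rightarrow> real) \<Rightarrow> real \<Rightarrow> (real \<times> real) set" where
  "K_set c F \<mu> = {m \<in> unitsq. F m < 1 \<and> \<mu> \<ge> nn c F m}"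

definition R_m :: "real \<Rightarrow> (real \<times> real \<Rightarrow> real) \<Rightarrow> real \<times> real \<Rightarrow> (real \<times> real) set" where
  "R_m c F h = {m \<in> unitsq. wbar_b c F h m - wbar_s F h
                 \<le> nn c F m * nn c F h * (wbar_t c F h m - wbar_s F h)}"

end

theory Submission
  imports Defs
begin

text \<open>
  Output always equals factor income \<open>w + r \<mu>\<close> plus the profits of the active firms. At prices
  where no firm type is profitable, any feasible allocation therefore produces at most
  \<open>w + r \<mu>\<close>, and an equilibrium, where active types earn zero profit, attains this bound.
  Existence is shown region by region: in each case of the proposition the stated prices make
  the active firm types break even and leave all others unprofitable. In case (b) the prices
  are the solution of the two zero-profit conditions of \<open>b\<close> and \<open>t\<close> firms, and the mixing
  share of \<open>b\<close> firms is chosen to employ exactly \<open>\<mu>\<close> machines, which is possible because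
  \<open>1 / n(h) \<le> \<mu> < n(m)\<close>.
\<close>

lemma integral_pos_cbox:
  fixes f :: "'a::euclidean_space \<Rightarrow> real"
  assumes f: "f integrable_on cbox a b" and pos: "\<And>x. x \<in> cbox a b \<Longrightarrow> f x > 0"
    and box: "box a b \<noteq> {}"
  shows "integral (cbox a b) f > 0"
proof -
  let ?M = "lebesgue_on (cbox a b)"
  have "f absolutely_integrable_on cbox a b"
    using f pos by (intro nonnegative_absolutely_integrable_1) (auto intro: less_imp_le)
  then have Mf: "integrable ?M f"
    by (rule absolutely_integrable_imp_integrable) auto
  have lebesgue_eq: "integral\<^sup>L ?M f = integral (cbox a b) f"
    by (rule lebesgue_integral_eq_integral[OF Mf]) auto
  have "integral (cbox a b) f \<noteq> 0"
  proof
    assume "integral (cbox a b) f = 0"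
    moreover have "AE x in ?M. 0 \<le> f x"
      using pos by (intro AE_I2) (auto simp: space_restrict_space intro: less_imp_le)
    ultimately have "AE x in ?M. f x = 0"
      using integral_nonneg_eq_0_iff_AE[OF Mf] lebesgue_eq by simp
    then have "AE x in ?M. False"
      by (rule AE_mp) (use pos in \<open>fastforce intro!: AE_I2 simp: space_restrict_space\<close>)
    then have "emeasure ?M (space ?M) = 0"
      using ae_filter_eq_bot_iff trivial_limit_def by metis
    moreover have "emeasure ?M (space ?M) = emeasure lebesgue (cbox a b)"
      by (subst emeasure_restrict_space) (auto simp: space_restrict_space)
    moreover have "emeasure lebesgue (cbox a b) > 0"
      using box by (auto simp: emeasure_lborel_cbox_eq box_ne_empty inner_diff_left intro!: prod_pos)
    ultimately show False by simp
  qed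
  moreover have "integral (cbox a b) f \<ge> 0"
    using pos by (intro integral_nonneg[OF f]) (auto intro: less_imp_le)
  ultimately show ?thesis by simp
qed

lemma cbox_origin_subset_unitsq: "x \<in> unitsq \<Longrightarrow> cbox (0, 0) x \<subseteq> unitsq"
  by (cases x) (auto simp: unitsq_def cbox_Pair_eq)

lemma cdf_bounds:
  fixes f F :: "real \<times> real \<Rightarrow> real"
  assumes f_int: "f integrable_on unitsq" and f_nonneg: "\<And>x. x \<in> unitsq \<Longrightarrow> 0 \<le> f x"
    and f_mass: "integral unitsq f = 1"
    and F_def: "\<And>x. x \<in> unitsq \<Longrightarrow> F x = integral (cbox (0, 0) x) f"
    and x: "x \<in> unitsq"
  shows "0 \<le> F x" and "F x \<le> 1"
proof -
  have sub: "cbox (0, 0) x \<subseteq> unitsq"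
    using cbox_origin_subset_unitsq[OF x] .
  have f_x: "f integrable_on cbox (0, 0) x"
    using integrable_on_subcbox[OF f_int sub] .
  show "0 \<le> F x"
    using integral_nonneg[OF f_x] sub f_nonneg F_def[OF x] by (metis subsetD)
  show "F x \<le> 1"
    using integral_subset_le[OF sub f_x f_int] f_nonneg f_mass F_def[OF x] by simp
qed

lemma cdf_lt_1:
  fixes f F :: "real \<times> real \<Rightarrow> real"
  assumes f_int: "f integrable_on unitsq" and f_pos: "\<And>x. x \<in> unitsq \<Longrightarrow> 0 < f x"
    and f_mass: "integral unitsq f = 1"
    and F_def: "\<And>x. x \<in> unitsq \<Longrightarrow> F x = integral (cbox (0, 0) x) f"
    and h: "h \<in> {0<..<1} \<times> {0<..<1}"
  shows "F h < 1"
proof -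
  obtain h1 h2 where hh: "h = (h1, h2)" "0 < h1" "h1 < 1" "0 < h2" "h2 < 1"
    using h by auto
  have hu: "h \<in> unitsq"
    using hh by (auto simp: unitsq_def)
  let ?B = "cbox (0::real, 0::real) h" and ?C = "cbox (h1, 0::real) (1, 1)"
  have B: "?B \<subseteq> unitsq" and C: "?C \<subseteq> unitsq"
    using cbox_origin_subset_unitsq[OF hu] hh by (auto simp: unitsq_def cbox_Pair_eq)
  have iB: "f integrable_on ?B" and iC: "f integrable_on ?C"
    using integrable_on_subcbox[OF f_int] B C by auto
  have "negligible (?B \<inter> ?C)"
  proof (rule negligible_subset)
    show "negligible {x. (1::real, 0::real) \<bullet> x = h1}"
      by (rule negligible_hyperplane) (simp add: zero_prod_def)
    show "?B \<inter> ?C \<subseteq> {x. (1::real, 0::real) \<bullet> x = h1}"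
      using hh by (auto simp: cbox_Pair_eq inner_Pair)
  qed
  then have "F h + integral ?C f = integral (?B \<union> ?C) f"
    using iB iC F_def[OF hu] by simp
  also have "\<dots> \<le> 1"
    using iB iC \<open>negligible (?B \<inter> ?C)\<close> f_pos f_int B C f_mass
    by (metis integral_subset_le integrable_Un le_sup_iff less_imp_le)
  finally show ?thesis
    using integral_pos_cbox[OF iC] f_pos C hh by (force simp: box_ne_empty Basis_prod_def)
qed

text \<open>A \<open>b\<close> firm has one human solver, a \<open>t\<close> firm one machine solver, so there are
  \<open>a_b A\<close> firms of type \<open>b\<close> but \<open>m_t A\<close> firms of type \<open>t\<close>.\<close>

lemma total_output_eq_income_plus_profits:
  assumes A: "feasible c F h \<mu> m A" and nh: "nn c F h \<noteq> 0"
  shows "total_output c F h m A = w + r * \<mu>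
           + a_s A * prof_s F h w + m_s A * prof_a F m r
           + a_b A * prof_b c F h m w r + m_t A * prof_t c F h m w r"
proof -
  have a_t: "a_t A = m_t A * nn c F h"
    using A nh by (simp add: feasible_def)
  have "w + r * \<mu> = w * (a_s A + a_b A + a_t A) + r * (m_s A + a_b A * nn c F m + m_t A)"
    using A by (simp add: feasible_def)
  then show ?thesis
    unfolding total_output_def prof_s_def prof_a_def prof_b_def prof_t_def a_t
    by (simp add: algebra_simps)
qed

lemma total_output_le_of_nonpos_profits:
  assumes A: "feasible c F h \<mu> m A" and nh: "nn c F h \<noteq> 0"
    and "prof_s F h w \<le> 0" "prof_a F m r \<le> 0"
    and "F m < 1 \<Longrightarrow> prof_b c F h m w r \<le> 0" "prof_t c F h m w r \<le> 0"
  shows "total_output c F h m A \<le> w + r * \<mu>"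
proof -
  have "0 \<le> a_s A" "0 \<le> m_s A" "0 \<le> m_t A"
    using A by (simp_all add: feasible_def)
  then have "a_s A * prof_s F h w \<le> 0" "m_s A * prof_a F m r \<le> 0"
      "m_t A * prof_t c F h m w r \<le> 0"
    using assms(3,4,6) by (simp_all add: mult_nonneg_nonpos)
  moreover have "a_b A * prof_b c F h m w r \<le> 0"
    using A assms(5) by (cases "F m < 1") (auto simp: feasible_def mult_nonneg_nonpos)
  ultimately show ?thesis
    unfolding total_output_eq_income_plus_profits[OF A nh, of w r] by linarith
qed

lemma equilibrium_total_output:
  assumes eq: "equilibrium c F h \<mu> m A w r" and nh: "nn c F h > 0"
  shows "total_output c F h m A = w + r * \<mu>"
proof -
  have A: "feasible c F h \<mu> m A"
    using eq by (simp add: equilibrium_def)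
  have zero_unless_pos: "x * p = 0" if "0 \<le> x" "x > 0 \<Longrightarrow> p = 0" for x p :: real
    using that by fastforce
  have "m_t A > 0 \<longleftrightarrow> a_t A > 0"
    using A nh by (auto simp: feasible_def zero_less_divide_iff)
  then have "a_s A * prof_s F h w = 0" "m_s A * prof_a F m r = 0"
      "a_b A * prof_b c F h m w r = 0" "m_t A * prof_t c F h m w r = 0"
    using eq A unfolding equilibrium_def feasible_def by (auto intro!: zero_unless_pos)
  then show ?thesis
    using total_output_eq_income_plus_profits[OF A, of w r] nh by linarith
qed

lemma equilibrium_maximizes_total_output:
  assumes eq: "equilibrium c F h \<mu> m A w r" and A': "feasible c F h \<mu> m A'"
    and nh: "nn c F h > 0"
  shows "total_output c F h m A' \<le> total_output c F h m A"
  using total_output_le_of_nonpos_profits[OF A'] equilibrium_total_output[OF eq nh] eq nh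
  by (simp add: equilibrium_def)

lemma nn_gt_1:
  assumes "0 < c" "c < 1" "0 \<le> F x" "F x < 1"
  shows "nn c F x > 1"
proof -
  have "c * (1 - F x) \<le> c * 1"
    using assms by (intro mult_left_mono) auto
  moreover have "0 < c * (1 - F x)"
    using assms by simp
  ultimately show ?thesis
    using \<open>c < 1\<close> by (simp add: nn_def)
qed

lemma zero_profits_at_mixed_prices:
  assumes F_m: "F m \<noteq> 1" and D: "nn c F m * nn c F h \<noteq> 1" and nh: "nn c F h \<noteq> 0"
  defines "w \<equiv> wbar_b c F h m - nn c F m * nn c F h * (wbar_b c F h m - wbar_t c F h m)
                                   / (nn c F m * nn c F h - 1)"
    and "r \<equiv> F m + nn c F h * (wbar_b c F h m - wbar_t c F h m) / (nn c F m * nn c F h - 1)"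
  shows "prof_b c F h m w r = 0" and "prof_t c F h m w r = 0"
proof -
  have "nn c F m * nn c F h - 1 \<noteq> 0"
    using D by simp
  then show "prof_b c F h m w r = 0" "prof_t c F h m w r = 0"
    using F_m nh by (simp_all add: w_def r_def prof_b_def prof_t_def wbar_b_def wbar_t_def field_simps)
qed

locale automation_economy =
  fixes c :: real and F :: "real \<times> real \<Rightarrow> real" and h :: "real \<times> real" and \<mu> :: real
  assumes c_pos: "0 < c" and c_lt_1: "c < 1"
    and F_nonneg: "x \<in> unitsq \<Longrightarrow> 0 \<le> F x" and F_le_1: "x \<in> unitsq \<Longrightarrow> F x \<le> 1"
    and h_in_unitsq: "h \<in> unitsq" and F_h_lt_1: "F h < 1"
    and mu_pos: "0 < \<mu>"
begin

lemma F_h_nonneg: "0 \<le> F h"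
  using F_nonneg[OF h_in_unitsq] .

lemma nn_h_gt_1: "nn c F h > 1"
  using nn_gt_1 c_pos c_lt_1 F_h_nonneg F_h_lt_1 .

lemma nn_gt_1_of_F_lt_1: "x \<in> unitsq \<Longrightarrow> F x < 1 \<Longrightarrow> nn c F x > 1"
  using nn_gt_1 c_pos c_lt_1 F_nonneg by blast

lemma F_lt_1_of_R_b:
  assumes "m \<in> R_b c F h"
  shows "F m < 1"
proof -
  have m: "m \<in> unitsq" and "F m \<noteq> 1"
    using assms F_h_nonneg by (auto simp: R_b_def wbar_b_def wbar_s_def)
  then show ?thesis
    using F_le_1[OF m] by linarith
qed

lemma equilibrium_R_s:
  assumes m: "m \<in> R_s c F h"
  shows "equilibrium c F h \<mu> m
           \<lparr>a_s = 1, a_b = 0, a_t = 0, m_s = \<mu>, m_b = 0, m_t = 0\<rparr>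
           (max (wbar_s F h) (max (wbar_b c F h m) (wbar_t c F h m))) (F m)"
proof -
  have "m \<in> unitsq" and w: "max (wbar_s F h) (max (wbar_b c F h m) (wbar_t c F h m)) = F h"
    using m by (auto simp: R_s_def wbar_s_def)
  have "F m < 1 \<Longrightarrow> prof_b c F h m (F h) (F m) \<le> 0"
    using m by (auto simp: R_s_def wbar_s_def wbar_b_def prof_b_def)
  moreover have "prof_t c F h m (F h) (F m) = nn c F h * (wbar_t c F h m - F h)"
    using nn_h_gt_1 by (simp add: prof_t_def wbar_t_def field_simps)
  moreover have "wbar_t c F h m \<le> F h"
    using m by (auto simp: R_s_def wbar_s_def)
  ultimately show ?thesis
    unfolding w using nn_h_gt_1 F_h_nonneg F_nonneg[OF \<open>m \<in> unitsq\<close>] mu_pos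
    by (simp add: equilibrium_def feasible_def prof_s_def prof_a_def mult_nonneg_nonpos)
qed

lemma equilibrium_R_b_K:
  assumes m: "m \<in> R_b c F h \<inter> K_set c F \<mu>"
  shows "equilibrium c F h \<mu> m
           \<lparr>a_s = 0, a_b = 1, a_t = 0, m_s = \<mu> - nn c F m, m_b = nn c F m, m_t = 0\<rparr>
           (max (wbar_s F h) (max (wbar_b c F h m) (wbar_t c F h m))) (F m)"
proof -
  have "m \<in> unitsq" and F_m: "F m < 1"
    using m F_lt_1_of_R_b by (auto simp: R_b_def)
  have w: "max (wbar_s F h) (max (wbar_b c F h m) (wbar_t c F h m)) = wbar_b c F h m"
    and gt: "wbar_b c F h m > F h" "wbar_b c F h m > wbar_t c F h m"
    using m by (auto simp: R_b_def wbar_s_def)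
  have "prof_t c F h m (wbar_b c F h m) (F m) = nn c F h * (wbar_t c F h m - wbar_b c F h m)"
    using nn_h_gt_1 by (simp add: prof_t_def wbar_t_def field_simps)
  then have "prof_t c F h m (wbar_b c F h m) (F m) \<le> 0"
    using gt nn_h_gt_1 by (simp add: mult_nonneg_nonpos)
  then show ?thesis
    unfolding w using F_h_nonneg F_nonneg[OF \<open>m \<in> unitsq\<close>] gt F_m m
      nn_gt_1_of_F_lt_1[OF \<open>m \<in> unitsq\<close> F_m]
    by (simp add: equilibrium_def feasible_def prof_s_def prof_a_def prof_b_def wbar_b_def K_set_def)
qed

lemma equilibrium_R_t:
  assumes m: "m \<in> R_t c F h" and mu_ge: "1 / nn c F h \<le> \<mu>"
  shows "equilibrium c F h \<mu> m
           \<lparr>a_s = 0, a_b = 0, a_t = 1, m_s = \<mu> - 1 / nn c F h, m_b = 0, m_t = 1 / nn c F h\<rparr>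
           (max (wbar_s F h) (max (wbar_b c F h m) (wbar_t c F h m))) (F m)"
proof -
  have "m \<in> unitsq"
    using m by (simp add: R_t_def)
  then have le: "wbar_b c F h m \<le> wbar_t c F h m" "F h < wbar_t c F h m"
    using m by (auto simp: R_t_def R_s_def R_b_def wbar_s_def)
  then have w: "max (wbar_s F h) (max (wbar_b c F h m) (wbar_t c F h m)) = wbar_t c F h m"
    by (auto simp: wbar_s_def)
  have "prof_t c F h m (wbar_t c F h m) (F m) = 0"
    using nn_h_gt_1 by (simp add: prof_t_def wbar_t_def field_simps)
  moreover have "F m < 1 \<Longrightarrow> prof_b c F h m (wbar_t c F h m) (F m) \<le> 0"
    using le by (simp add: prof_b_def wbar_b_def)
  ultimately show ?thesis
    unfolding w using F_h_nonneg F_nonneg[OF \<open>m \<in> unitsq\<close>] le mu_ge nn_h_gt_1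
    by (simp add: equilibrium_def feasible_def prof_s_def prof_a_def)
qed

lemma equilibrium_R_b_mixed:
  assumes m: "m \<in> R_b c F h \<inter> (unitsq - K_set c F \<mu>) \<inter> R_m c F h"
    and mu_ge: "1 / nn c F h \<le> \<mu>"
  shows "\<exists>A. a_s A = 0 \<and> m_s A = 0 \<and> a_b A + a_t A = 1 \<and> m_b A + m_t A = \<mu> \<and>
             m_b A = a_b A * nn c F m \<and> m_t A = a_t A / nn c F h \<and>
             equilibrium c F h \<mu> m A
               (wbar_b c F h m - nn c F m * nn c F h * (wbar_b c F h m - wbar_t c F h m)
                                   / (nn c F m * nn c F h - 1))
               (F m + nn c F h * (wbar_b c F h m - wbar_t c F h m)
                                   / (nn c F m * nn c F h - 1))"
proof -
  let ?w = "wbar_b c F h m - nn c F m * nn c F h * (wbar_b c F h m - wbar_t c F h m)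
                                   / (nn c F m * nn c F h - 1)"
  let ?r = "F m + nn c F h * (wbar_b c F h m - wbar_t c F h m) / (nn c F m * nn c F h - 1)"
  have "m \<in> unitsq" and F_m: "F m < 1"
    using m F_lt_1_of_R_b by (auto simp: R_b_def)
  have nm: "nn c F m > 1"
    using nn_gt_1_of_F_lt_1[OF \<open>m \<in> unitsq\<close> F_m] .
  have mu_lt: "\<mu> < nn c F m"
    using m F_m by (auto simp: K_set_def)
  have D: "nn c F m * nn c F h - 1 > 0"
    using less_1_mult[OF nm nn_h_gt_1] by simp
  have gt: "wbar_b c F h m > wbar_t c F h m"
    using m by (auto simp: R_b_def)
  have Rm: "wbar_b c F h m - F h \<le> nn c F m * nn c F h * (wbar_t c F h m - F h)"
    using m by (auto simp: R_m_def wbar_s_def)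
  have "?w - F h = (nn c F m * nn c F h * (wbar_t c F h m - F h) - (wbar_b c F h m - F h))
                     / (nn c F m * nn c F h - 1)"
    using D by (simp add: field_simps)
  moreover have "0 \<le> (nn c F m * nn c F h * (wbar_t c F h m - F h) - (wbar_b c F h m - F h))
                     / (nn c F m * nn c F h - 1)"
    using Rm D by simp
  ultimately have w: "F h \<le> ?w"
    by linarith
  have r: "F m \<le> ?r"
    using gt D nn_h_gt_1 by simp
  have zero: "prof_b c F h m ?w ?r = 0" "prof_t c F h m ?w ?r = 0"
    using zero_profits_at_mixed_prices[of F m c h] F_m D nn_h_gt_1 by simp_all
  define \<beta> where "\<beta> = (\<mu> - 1 / nn c F h) / (nn c F m - 1 / nn c F h)"
  have "1 / nn c F h < 1"
    using nn_h_gt_1 by simp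
  then have \<beta>: "0 \<le> \<beta>" "\<beta> < 1"
    using mu_ge mu_lt nm by (simp_all add: \<beta>_def)
  have "\<beta> * nn c F m + (1 - \<beta>) / nn c F h = 1 / nn c F h + \<beta> * (nn c F m - 1 / nn c F h)"
    using nn_h_gt_1 by (simp add: field_simps)
  also have "\<dots> = \<mu>"
    using \<open>1 / nn c F h < 1\<close> nm by (simp add: \<beta>_def)
  finally have machines: "\<beta> * nn c F m + (1 - \<beta>) / nn c F h = \<mu>" .
  let ?A = "\<lparr>a_s = 0, a_b = \<beta>, a_t = 1 - \<beta>, m_s = 0,
             m_b = \<beta> * nn c F m, m_t = (1 - \<beta>) / nn c F h\<rparr>"
  have "a_s ?A = 0 \<and> m_s ?A = 0 \<and> a_b ?A + a_t ?A = 1 \<and> m_b ?A + m_t ?A = \<mu> \<and>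
        m_b ?A = a_b ?A * nn c F m \<and> m_t ?A = a_t ?A / nn c F h \<and>
        equilibrium c F h \<mu> m ?A ?w ?r"
    using w r zero \<beta> machines F_h_nonneg F_nonneg[OF \<open>m \<in> unitsq\<close>] nm nn_h_gt_1 F_m
    by (simp add: equilibrium_def feasible_def prof_s_def prof_a_def)
  then show ?thesis
    by (rule exI[of _ ?A])
qed

lemma equilibrium_R_b_rationed:
  assumes m: "m \<in> R_b c F h \<inter> (unitsq - K_set c F \<mu>) \<inter> (unitsq - R_m c F h)"
  shows "equilibrium c F h \<mu> m
           \<lparr>a_s = 1 - \<mu> / nn c F m, a_b = \<mu> / nn c F m, a_t = 0, m_s = 0, m_b = \<mu>, m_t = 0\<rparr>
           (F h) (F (vmax m h) - F h / nn c F m)"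
proof -
  have "m \<in> unitsq" and F_m: "F m < 1"
    using m F_lt_1_of_R_b by (auto simp: R_b_def)
  have nm: "nn c F m > 1"
    using nn_gt_1_of_F_lt_1[OF \<open>m \<in> unitsq\<close> F_m] .
  have mu_lt: "\<mu> < nn c F m"
    using m \<open>m \<in> unitsq\<close> F_m by (auto simp: K_set_def)
  have wb: "wbar_b c F h m = nn c F m * (F (vmax m h) - F m)"
    using F_m by (simp add: wbar_b_def)
  have gt: "wbar_b c F h m > F h"
    using m by (auto simp: R_b_def wbar_s_def)
  have not_Rm: "wbar_b c F h m - F h > nn c F m * nn c F h * (wbar_t c F h m - F h)"
    using m \<open>m \<in> unitsq\<close> by (auto simp: R_m_def wbar_s_def)
  let ?r = "F (vmax m h) - F h / nn c F m"
  have "?r - F m = (wbar_b c F h m - F h) / nn c F m"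
    using wb nm by (simp add: field_simps)
  moreover have "(wbar_b c F h m - F h) / nn c F m > 0"
    using gt nm by simp
  ultimately have r: "F m < ?r"
    by linarith
  have b: "prof_b c F h m (F h) ?r = 0"
    using nm by (simp add: prof_b_def field_simps)
  have "nn c F m * prof_t c F h m (F h) ?r
          = nn c F m * nn c F h * (wbar_t c F h m - F h) - (wbar_b c F h m - F h)"
    using nm nn_h_gt_1 by (simp add: prof_t_def wbar_t_def wb field_simps)
  then have "nn c F m * prof_t c F h m (F h) ?r < 0"
    using not_Rm by simp
  then have t: "prof_t c F h m (F h) ?r \<le> 0"
    using nm by (simp add: mult_less_0_iff)
  have "0 < \<mu> / nn c F m" "\<mu> / nn c F m < 1"
    using mu_pos mu_lt nm by simp_all
  then show ?thesis
    using r b t F_h_nonneg F_nonneg[OF \<open>m \<in> unitsq\<close>] nm F_m mu_pos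
    by (simp add: equilibrium_def feasible_def prof_s_def prof_a_def)
qed

lemma equilibrium_exists:
  assumes "m \<in> unitsq" and mu_ge: "1 / nn c F h \<le> \<mu>"
  shows "\<exists>A w r. equilibrium c F h \<mu> m A w r"
proof -
  consider "m \<in> R_s c F h" | "m \<in> R_t c F h" | "m \<in> R_b c F h \<inter> K_set c F \<mu>"
    | "m \<in> R_b c F h \<inter> (unitsq - K_set c F \<mu>) \<inter> R_m c F h"
    | "m \<in> R_b c F h \<inter> (unitsq - K_set c F \<mu>) \<inter> (unitsq - R_m c F h)"
    using assms by (auto simp: R_t_def)
  then show ?thesis
  proof cases
    case 4
    then show ?thesis
      using equilibrium_R_b_mixed[OF _ mu_ge] by blast
  qed (use equilibrium_R_s equilibrium_R_t[OF _ mu_ge] equilibrium_R_b_K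
         equilibrium_R_b_rationed in blast)+
qed

end

theorem proposition5:
  fixes F f :: "real \<times> real \<Rightarrow> real" and c \<mu> :: real and h :: "real \<times> real"
  assumes f_int: "f integrable_on unitsq"
      and f_pos: "\<forall>x\<in>unitsq. f x > 0"
      and f_mass: "integral unitsq f = 1"
      and F_def: "\<forall>x\<in>unitsq. F x = integral (cbox (0, 0) x) f"
      and c: "0 < c" "c < 1"
      and h: "h \<in> {0<..<1} \<times> {0<..<1}"
      and mu_pos: "\<mu> > 0"
      and mu_ge: "\<mu> \<ge> 1 / nn c F h"
  shows
    "(\<forall>m\<in>unitsq. \<exists>A w r. equilibrium c F h \<mu> m A w r)
   \<and> (\<forall>m\<in>unitsq. \<forall>A w r. equilibrium c F h \<mu> m A w r \<longrightarrow>
         (\<forall>A'. feasible c F h \<mu> m A' \<longrightarrow> total_output c F h m A' \<le> total_output c F h m A))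
   \<and> (\<forall>m\<in>R_s c F h.
         equilibrium c F h \<mu> m
           \<lparr>a_s = 1, a_b = 0, a_t = 0, m_s = \<mu>, m_b = 0, m_t = 0\<rparr>
           (max (wbar_s F h) (max (wbar_b c F h m) (wbar_t c F h m))) (F m))
   \<and> (\<forall>m\<in>R_b c F h \<inter> K_set c F \<mu>.
         equilibrium c F h \<mu> m
           \<lparr>a_s = 0, a_b = 1, a_t = 0, m_s = \<mu> - nn c F m, m_b = nn c F m, m_t = 0\<rparr>
           (max (wbar_s F h) (max (wbar_b c F h m) (wbar_t c F h m))) (F m))
   \<and> (\<forall>m\<in>R_t c F h.
         equilibrium c F h \<mu> m
           \<lparr>a_s = 0, a_b = 0, a_t = 1, m_s = \<mu> - 1 / nn c F h, m_b = 0, m_t = 1 / nn c F h\<rparr>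
           (max (wbar_s F h) (max (wbar_b c F h m) (wbar_t c F h m))) (F m))
   \<and> (\<forall>m\<in>R_b c F h \<inter> (unitsq - K_set c F \<mu>) \<inter> R_m c F h.
         \<exists>A. a_s A = 0 \<and> m_s A = 0 \<and> a_b A + a_t A = 1 \<and> m_b A + m_t A = \<mu> \<and>
             m_b A = a_b A * nn c F m \<and> m_t A = a_t A / nn c F h \<and>
             equilibrium c F h \<mu> m A
               (wbar_b c F h m - nn c F m * nn c F h * (wbar_b c F h m - wbar_t c F h m)
                                   / (nn c F m * nn c F h - 1))
               (F m + nn c F h * (wbar_b c F h m - wbar_t c F h m)
                                   / (nn c F m * nn c F h - 1)))
   \<and> (\<forall>m\<in>R_b c F h \<inter> (unitsq - K_set c F \<mu>) \<inter> (unitsq - R_m c F h).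
         equilibrium c F h \<mu> m
           \<lparr>a_s = 1 - \<mu> / nn c F m, a_b = \<mu> / nn c F m, a_t = 0, m_s = 0, m_b = \<mu>, m_t = 0\<rparr>
           (F h) (F (vmax m h) - F h / nn c F m))"
proof -
  have F_bounds: "0 \<le> F x" "F x \<le> 1" if "x \<in> unitsq" for x
    using cdf_bounds[OF f_int _ f_mass _ that] f_pos F_def by (auto intro: less_imp_le)
  interpret automation_economy c F h \<mu>
  proof
    show "h \<in> unitsq"
      using h by (auto simp: unitsq_def)
    show "F h < 1"
      using cdf_lt_1[OF f_int _ f_mass _ h] f_pos F_def by blast
  qed (use F_bounds c mu_pos in auto)
  have "nn c F h > 0"
    using nn_h_gt_1 by simp
  then show ?thesis
    using equilibrium_exists[OF _ mu_ge] equilibrium_maximizes_total_output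
      equilibrium_R_s equilibrium_R_b_K equilibrium_R_t[OF _ mu_ge]
      equilibrium_R_b_mixed[OF _ mu_ge] equilibrium_R_b_rationed
    by blast
qed

end
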